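(* For all $1\le i\le\ell$, $$\Delta(X_i)=X_i\otimes N_{i,i-1}+\hat K^{-1}\otimes X_i+q^{-\frac12}(q-q^{-1})\sum_{j=i}^{\ell-1}X_{j+1}\otimes N_{i,j}M_{i,j}^*.$$
   Context: $0<q<1$, $\ell\ge1$. $U_q(\mathfrak{su}(\ell+1))$: Hopf $*$-algebra generated by $K_i^{\pm1},E_i,F_i=E_i^*$, $K_i^*=K_i$ ($1\le i\le\ell$) with the standard Drinfeld–Jimbo relations ($K_iE_iK_i^{-1}=qE_i$, $K_iE_jK_i^{-1}=q^{-1/2}E_j$ for $|i-j|=1$, $=E_j$ for $|i-j|>1$, $[E_i,F_j]=\delta_{ij}\frac{K_i^2-K_i^{-2}}{q-q^{-1}}$, quantum Serre), $\Delta(K_i)=K_i\otimes K_i$, $\Delta(E_i)=E_i\otimes K_i+K_i^{-1}\otimes E_i$, enlarged by the grouplike element $\hat K=(K_1K_2^2\cdots K_\ell^\ell)^{2/(\ell+1)}$. $[a,b]_q=ab-q^{-1}ba$, $M_{ii}=E_i$, $M_{jk}=[E_j,M_{j+1,k}]_q$ ($j<k$), $N_{jk}=(K_j\cdots K_\ell)(K_{k+1}\cdots K_\ell)\hat K^{-1}$, $X_i=N_{i\ell}M_{i\ell}^*$. *)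

theory Defs
  imports Complex_Main
begin

definition qbr :: "real \<Rightarrow> 'a::real_algebra_1 \<Rightarrow> 'a \<Rightarrow> 'a" where
  "qbr q a b = a * b - scaleR (inverse q) (b * a)"

text \<open>Mrec q E j d = M_{j,j+d}; M_{jj} = E_j, M_{jk} = [E_j, M_{j+1,k}]_q.\<close>
fun Mrec :: "real \<Rightarrow> (nat \<Rightarrow> 'a::real_algebra_1) \<Rightarrow> nat \<Rightarrow> nat \<Rightarrow> 'a" where
  "Mrec q E j 0 = E j"
| "Mrec q E j (Suc d) = qbr q (E j) (Mrec q E (Suc j) d)"

definition Mel :: "real \<Rightarrow> (nat \<Rightarrow> 'a::real_algebra_1) \<Rightarrow> nat \<Rightarrow> nat \<Rightarrow> 'a" where
  "Mel q E j k = Mrec q E j (k - j)"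

definition Kprod :: "(nat \<Rightarrow> 'a::real_algebra_1) \<Rightarrow> nat \<Rightarrow> nat \<Rightarrow> 'a" where
  "Kprod K a l = prod_list (map K [a..<Suc l])"

definition Nel :: "nat \<Rightarrow> (nat \<Rightarrow> 'a::real_algebra_1) \<Rightarrow> 'a \<Rightarrow> nat \<Rightarrow> nat \<Rightarrow> 'a" where
  "Nel l K Khi j k = Kprod K j l * Kprod K (Suc k) l * Khi"

definition Xel :: "nat \<Rightarrow> real \<Rightarrow> (nat \<Rightarrow> 'a::real_algebra_1) \<Rightarrow> (nat \<Rightarrow> 'a) \<Rightarrow> 'a
                   \<Rightarrow> ('a \<Rightarrow> 'a) \<Rightarrow> nat \<Rightarrow> 'a" where
  "Xel l q K E Khi st i = Nel l K Khi i l * st (Mel q E i l)"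

definition star_inv :: "('a::real_algebra_1 \<Rightarrow> 'a) \<Rightarrow> bool" where
  "star_inv st \<longleftrightarrow> (\<forall>a. st (st a) = a) \<and> (\<forall>a b. st (a + b) = st a + st b)
     \<and> (\<forall>r a. st (scaleR r a) = scaleR r (st a)) \<and> (\<forall>a b. st (a * b) = st b * st a)
     \<and> st 1 = 1"

text \<open>The data: elements K_i, K_i^{-1}, E_i (1 \<le> i \<le> l), Khat, Khat^{-1} of a real
  *-algebra A satisfying the defining relations of U_q(su(l+1)) enlarged by Khat;
  a "tensor square" T of A given by a multiplicative bilinear map tens
  (with the involution stT, (a \<otimes> b)^* = a^* \<otimes> b^*); and a unital
  *-algebra homomorphism Dl : A \<rightarrow> T taking the prescribed values on generators.\<close>
definition uq_data ::
  "nat \<Rightarrow> real \<Rightarrow> (nat \<Rightarrow> 'a::real_algebra_1) \<Rightarrow> (nat \<Rightarrow> 'a) \<Rightarrow> (nat \<Rightarrow> 'a) \<Rightarrow> 'a \<Rightarrow> 'a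
   \<Rightarrow> ('a \<Rightarrow> 'a) \<Rightarrow> ('a \<Rightarrow> 'a \<Rightarrow> 't::real_algebra_1) \<Rightarrow> ('t \<Rightarrow> 't) \<Rightarrow> ('a \<Rightarrow> 't) \<Rightarrow> bool" where
  "uq_data l q K Ki E Kh Khi st tens stT Dl \<longleftrightarrow>
     \<comment> \<open>*-structures\<close>
     star_inv st \<and> star_inv stT
   \<and> (\<forall>i\<in>{1..l}. st (K i) = K i) \<and> st Kh = Kh
     \<comment> \<open>invertibility and commutation of Cartan part\<close>
   \<and> (\<forall>i\<in>{1..l}. K i * Ki i = 1 \<and> Ki i * K i = 1)
   \<and> Kh * Khi = 1 \<and> Khi * Kh = 1
   \<and> (\<forall>i\<in>{1..l}. \<forall>j\<in>{1..l}. K i * K j = K j * K i)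
   \<and> (\<forall>i\<in>{1..l}. Kh * K i = K i * Kh)
     \<comment> \<open>K_i E_j K_i^{-1}\<close>
   \<and> (\<forall>i\<in>{1..l}. \<forall>j\<in>{1..l}.
        K i * E j * Ki i =
          (if i = j then scaleR q (E j)
           else if i = j + 1 \<or> j = i + 1 then scaleR (q powr (-1/2)) (E j)
           else E j))
     \<comment> \<open>[E_i, F_j] with F_j = E_j^*\<close>
   \<and> (\<forall>i\<in>{1..l}. \<forall>j\<in>{1..l}.
        E i * st (E j) - st (E j) * E i =
          (if i = j then scaleR (1 / (q - inverse q)) (K i * K i - Ki i * Ki i) else 0))
     \<comment> \<open>quantum Serre relations\<close>
   \<and> (\<forall>i\<in>{1..l}. \<forall>j\<in>{1..l}.
        (i = j + 1 \<or> j = i + 1) \<longrightarrow>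
          E i * E i * E j - scaleR (q + inverse q) (E i * E j * E i) + E j * E i * E i = 0)
   \<and> (\<forall>i\<in>{1..l}. \<forall>j\<in>{1..l}. (i + 1 < j \<or> j + 1 < i) \<longrightarrow> E i * E j = E j * E i)
     \<comment> \<open>Khat = (K_1 K_2^2 ... K_l^l)^{2/(l+1)}, encoded by its relations\<close>
   \<and> Kh ^ (l + 1) = (\<Prod>i\<leftarrow>[1..<Suc l]. K i ^ i) ^ 2
   \<and> (\<forall>j\<in>{1..l}. Kh * E j * Khi = (if j = l then scaleR q (E j) else E j))
     \<comment> \<open>tensor square\<close>
   \<and> (\<forall>a b c. tens (a + b) c = tens a c + tens b c)
   \<and> (\<forall>a b c. tens a (b + c) = tens a b + tens a c)
   \<and> (\<forall>r a b. tens (scaleR r a) b = scaleR r (tens a b))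
   \<and> (\<forall>r a b. tens a (scaleR r b) = scaleR r (tens a b))
   \<and> (\<forall>a b c d. tens a b * tens c d = tens (a * c) (b * d))
   \<and> tens 1 1 = 1
   \<and> (\<forall>a b. stT (tens a b) = tens (st a) (st b))
     \<comment> \<open>coproduct: unital *-algebra homomorphism\<close>
   \<and> (\<forall>a b. Dl (a + b) = Dl a + Dl b)
   \<and> (\<forall>r a. Dl (scaleR r a) = scaleR r (Dl a))
   \<and> (\<forall>a b. Dl (a * b) = Dl a * Dl b)
   \<and> Dl 1 = 1
   \<and> (\<forall>a. Dl (st a) = stT (Dl a))
   \<and> (\<forall>i\<in>{1..l}. Dl (K i) = tens (K i) (K i) \<and> Dl (Ki i) = tens (Ki i) (Ki i))
   \<and> (\<forall>i\<in>{1..l}. Dl (E i) = tens (E i) (K i) + tens (Ki i) (E i))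
   \<and> Dl Kh = tens Kh Kh \<and> Dl Khi = tens Khi Khi"

end

theory Submission
  imports Defs
begin

text \<open>Write \<open>\<kappa>(a,b) = K\<^sub>a \<cdots> K\<^sub>b\<close> and \<open>r = q powr (-1/2)\<close>.
  The element \<open>N\<^sub>i\<^sub>\<ell> = \<kappa>(i,\<ell>) Khat\<^sup>-\<^sup>1\<close> is grouplike and \<open>\<Delta>\<close> is a \<open>*\<close>-homomorphism,
  so \<open>\<Delta>(X\<^sub>i) = (N\<^sub>i\<^sub>\<ell> \<otimes> N\<^sub>i\<^sub>\<ell>) \<Delta>(M\<^sub>i\<^sub>\<ell>)\<^sup>*\<close>. Unfolding \<open>M\<^sub>j\<^sub>k = [E\<^sub>j, M\<^sub>j\<^sub>+\<^sub>1\<^sub>,\<^sub>k]\<^sub>q\<close>, induction on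
  \<open>k - j\<close> gives
  \<open>\<Delta>(M\<^sub>j\<^sub>k) = M\<^sub>j\<^sub>k \<otimes> \<kappa>(j,k) + \<kappa>(j,k)\<^sup>-\<^sup>1 \<otimes> M\<^sub>j\<^sub>k + (1 - q\<^sup>-\<^sup>2) \<Sum>\<^sub>m \<kappa>(j,m)\<^sup>-\<^sup>1 M\<^sub>m\<^sub>+\<^sub>1\<^sub>,\<^sub>k \<otimes> M\<^sub>j\<^sub>m \<kappa>(m+1,k)\<close>
  (sum over \<open>j \<le> m < k\<close>). Among the \<open>q\<close>-commutators of \<open>E\<^sub>j \<otimes> K\<^sub>j\<close> and \<open>K\<^sub>j\<^sup>-\<^sup>1 \<otimes> E\<^sub>j\<close> with
  the terms of \<open>\<Delta>(M\<^sub>j\<^sub>+\<^sub>1\<^sub>,\<^sub>k)\<close>, those that are not of the above shape vanish: the two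
  orderings differ only by the factor \<open>r\<^sup>2 = q\<^sup>-\<^sup>1\<close> that the bracket subtracts, since \<open>K\<^sub>j\<^sup>\<plusminus>\<^sup>1\<close>
  commutes with every \<open>E\<^sub>p\<close>, \<open>p > j\<close>, except \<open>E\<^sub>j\<^sub>+\<^sub>1\<close>, and \<open>E\<^sub>j\<close> commutes with every \<open>E\<^sub>p\<close>,
  \<open>p > j + 1\<close>. Taking adjoints and multiplying by \<open>N\<^sub>i\<^sub>\<ell> \<otimes> N\<^sub>i\<^sub>\<ell>\<close> turns the three parts into
  the three terms of the formula: moving \<open>\<kappa>(i,m)\<^sup>-\<^sup>1\<close> past \<open>M\<^sub>m\<^sub>+\<^sub>1\<^sub>,\<^sub>\<ell>\<^sup>*\<close> costs \<open>r\<^sup>-\<^sup>1\<close>, and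
  \<open>(1 - q\<^sup>-\<^sup>2) r\<^sup>-\<^sup>1 = r (q - q\<^sup>-\<^sup>1)\<close>.\<close>

lemma prod_list_map_skew_commute_left:
  fixes f :: "nat \<Rightarrow> 'a::real_algebra_1"
  assumes "\<And>m. m \<in> set xs \<Longrightarrow> x * f m = c m *\<^sub>R (f m * x)"
  shows "x * prod_list (map f xs) = prod_list (map c xs) *\<^sub>R (prod_list (map f xs) * x)"
  using assms
proof (induction xs)
  case (Cons a xs)
  have "x * prod_list (map f (a # xs)) = (x * f a) * prod_list (map f xs)"
    by (simp add: mult.assoc)
  also have "\<dots> = c a *\<^sub>R (f a * (x * prod_list (map f xs)))"
    using Cons.prems by (simp add: mult.assoc)
  also have "\<dots> = (c a * prod_list (map c xs)) *\<^sub>R (f a * prod_list (map f xs) * x)"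
    using Cons by (simp add: mult.assoc)
  finally show ?case by simp
qed simp

lemma prod_list_map_skew_commute_right:
  fixes f :: "nat \<Rightarrow> 'a::real_algebra_1"
  assumes "\<And>m. m \<in> set xs \<Longrightarrow> f m * x = c m *\<^sub>R (x * f m)"
  shows "prod_list (map f xs) * x = prod_list (map c xs) *\<^sub>R (x * prod_list (map f xs))"
  using assms
proof (induction xs)
  case (Cons a xs)
  have "prod_list (map f (a # xs)) * x = f a * (prod_list (map f xs) * x)"
    by (simp add: mult.assoc)
  also have "\<dots> = prod_list (map c xs) *\<^sub>R ((f a * x) * prod_list (map f xs))"
  proof -
    have "prod_list (map f xs) * x = prod_list (map c xs) *\<^sub>R (x * prod_list (map f xs))"
      using Cons by simp
    then show ?thesis by (simp add: mult.assoc)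
  qed
  also have "\<dots> = (c a * prod_list (map c xs)) *\<^sub>R (x * (f a * prod_list (map f xs)))"
  proof -
    have "f a * x = c a *\<^sub>R (x * f a)"
      using Cons.prems by simp
    then show ?thesis by (simp add: mult.assoc[symmetric])
  qed
  finally show ?case by simp
qed simp

lemma prod_list_map_upt_Suc: "prod_list (map (c :: nat \<Rightarrow> real) [a..<Suc b]) = prod c {a..b}"
  by (metis atLeastLessThanSuc_atLeastAtMost distinct_upt prod.distinct_set_conv_list set_upt)

lemma Kprod_skew_commute_left:
  assumes "\<And>m. m \<in> {a..b} \<Longrightarrow> x * f m = c m *\<^sub>R (f m * x)"
  shows "x * Kprod f a b = prod c {a..b} *\<^sub>R (Kprod f a b * x)"
  unfolding Kprod_def prod_list_map_upt_Suc[symmetric]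
  by (rule prod_list_map_skew_commute_left) (use assms in auto)

lemma Kprod_skew_commute_right:
  assumes "\<And>m. m \<in> {a..b} \<Longrightarrow> f m * x = c m *\<^sub>R (x * f m)"
  shows "Kprod f a b * x = prod c {a..b} *\<^sub>R (x * Kprod f a b)"
  unfolding Kprod_def prod_list_map_upt_Suc[symmetric]
  by (rule prod_list_map_skew_commute_right) (use assms in auto)

lemma Kprod_commute:
  assumes "\<And>m. m \<in> {a..b} \<Longrightarrow> x * f m = f m * x"
  shows "x * Kprod f a b = Kprod f a b * x"
  using Kprod_skew_commute_left[of a b x f "\<lambda>_. 1"] assms by simp

lemma Kprod_Cons: "a \<le> b \<Longrightarrow> Kprod f a b = f a * Kprod f (Suc a) b"
  unfolding Kprod_def by (simp add: upt_rec)

lemma Kprod_empty: "b < a \<Longrightarrow> Kprod f a b = 1"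
  unfolding Kprod_def by simp

lemma Kprod_singleton: "Kprod f a a = f a"
  unfolding Kprod_def by simp

lemma Kprod_split: "a \<le> Suc m \<Longrightarrow> m \<le> b \<Longrightarrow> Kprod f a b = Kprod f a m * Kprod f (Suc m) b"
  unfolding Kprod_def
  by (metis Suc_le_mono le_add_diff_inverse map_append prod_list.append upt_add_eq_append)

lemma nat_down_induct [case_names above step]:
  assumes "\<And>a. b < a \<Longrightarrow> P a"
    and "\<And>a. a \<le> b \<Longrightarrow> P (Suc a) \<Longrightarrow> P a"
  shows "P a"
proof (induction "Suc b - a" arbitrary: a)
  case 0 then show ?case using assms(1) by simp
next
  case (Suc d) then show ?case using assms(2) by simp
qed

lemma Mel_same: "Mel q E j j = E j"
  unfolding Mel_def by simp

lemma Mel_rec: "j < k \<Longrightarrow> Mel q E j k = qbr q (E j) (Mel q E (Suc j) k)"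
  unfolding Mel_def by (subgoal_tac "k - j = Suc (k - Suc j)") auto

lemma Mel_skew_commute_left:
  fixes E :: "nat \<Rightarrow> 'a::real_algebra_1"
  assumes "\<And>m. m \<in> {j..k} \<Longrightarrow> x * E m = c m *\<^sub>R (E m * x)" and "j \<le> k"
  shows "x * Mel q E j k = prod c {j..k} *\<^sub>R (Mel q E j k * x)"
  using assms
proof (induction "k - j" arbitrary: j)
  case 0
  then show ?case by (simp add: Mel_same)
next
  case (Suc d)
  then have jk: "j < k" by simp
  define M where "M = Mel q E (Suc j) k"
  have IH: "x * M = prod c {Suc j..k} *\<^sub>R (M * x)"
    using Suc unfolding M_def by auto
  have xE: "x * E j = c j *\<^sub>R (E j * x)"
    using Suc jk by auto
  have "x * (E j * M) = (c j * prod c {Suc j..k}) *\<^sub>R (E j * M * x)"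
    by (simp add: mult.assoc[symmetric] xE) (simp add: mult.assoc IH)
  moreover have "x * (M * E j) = (c j * prod c {Suc j..k}) *\<^sub>R (M * E j * x)"
    by (simp add: mult.assoc[symmetric] IH) (simp add: mult.assoc xE)
  moreover have "prod c {j..k} = c j * prod c {Suc j..k}"
    using jk by (simp add: prod.atLeast_Suc_atMost)
  ultimately show ?case
    unfolding Mel_rec[OF jk] qbr_def M_def[symmetric]
    by (simp add: right_diff_distrib left_diff_distrib scaleR_right_diff_distrib)
qed

lemma qbr_add_left: "qbr q (A + B) C = qbr q A C + qbr q B C"
  by (simp add: qbr_def algebra_simps scaleR_right_diff_distrib)

lemma qbr_add_right: "qbr q A (B + C) = qbr q A B + qbr q A C"
  by (simp add: qbr_def algebra_simps scaleR_right_diff_distrib)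

lemma qbr_scaleR_right: "qbr q A (c *\<^sub>R B) = c *\<^sub>R qbr q A B"
  by (simp add: qbr_def scaleR_right_diff_distrib)

lemma qbr_sum_right: "qbr q A (sum f S) = (\<Sum>m\<in>S. qbr q A (f m))"
  by (simp add: qbr_def sum_distrib_left sum_distrib_right scaleR_sum_right sum_subtractf)

lemma Nel_last: "Nel l K Khi a l = Kprod K a l * Khi"
  by (simp add: Nel_def Kprod_empty)

lemma Xel_eq: "Xel l q K E Khi st a = Kprod K a l * Khi * st (Mel q E a l)"
  by (simp add: Xel_def Nel_last)

lemma inverse_commute:
  fixes a a' b :: "'a::monoid_mult"
  assumes "a * a' = 1" "a' * a = 1" "a * b = b * a"
  shows "a' * b = b * a'"
proof -
  have "a' * b = a' * b * (a * a')" using assms by simp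
  also have "\<dots> = a' * (b * a) * a'" by (simp add: mult.assoc)
  also have "\<dots> = a' * a * b * a'" using assms(3) by (simp add: mult.assoc)
  finally show ?thesis using assms by simp
qed

locale uq_coproduct =
  fixes l :: nat and q :: real
    and K Ki E :: "nat \<Rightarrow> 'a::real_algebra_1" and Khi :: 'a and st :: "'a \<Rightarrow> 'a"
    and tens :: "'a \<Rightarrow> 'a \<Rightarrow> 't::real_algebra_1" and stT :: "'t \<Rightarrow> 't" and Dl :: "'a \<Rightarrow> 't"
  assumes q_pos: "0 < q"
    and st_scaleR: "st (r *\<^sub>R a) = r *\<^sub>R st a"
    and st_mult: "st (a * b) = st b * st a"
    and st_one: "st 1 = 1"
    and stT_add: "stT (x + y) = stT x + stT y"
    and stT_scaleR: "stT (r *\<^sub>R x) = r *\<^sub>R stT x"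
    and st_K: "i \<in> {1..l} \<Longrightarrow> st (K i) = K i"
    and K_Ki: "i \<in> {1..l} \<Longrightarrow> K i * Ki i = 1"
    and Ki_K: "i \<in> {1..l} \<Longrightarrow> Ki i * K i = 1"
    and K_commute: "i \<in> {1..l} \<Longrightarrow> j \<in> {1..l} \<Longrightarrow> K i * K j = K j * K i"
    and Khi_K_commute: "i \<in> {1..l} \<Longrightarrow> Khi * K i = K i * Khi"
    and K_E_Ki: "i \<in> {1..l} \<Longrightarrow> j \<in> {1..l} \<Longrightarrow>
        K i * E j * Ki i =
          (if i = j then q *\<^sub>R E j
           else if i = j + 1 \<or> j = i + 1 then q powr (-1/2) *\<^sub>R E j
           else E j)"
    and E_commute_far: "i \<in> {1..l} \<Longrightarrow> j \<in> {1..l} \<Longrightarrow> i + 1 < j \<or> j + 1 < i \<Longrightarrow>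
        E i * E j = E j * E i"
    and tens_add_left: "tens (a + b) c = tens a c + tens b c"
    and tens_add_right: "tens a (b + c) = tens a b + tens a c"
    and tens_scaleR_left: "tens (r *\<^sub>R a) b = r *\<^sub>R tens a b"
    and tens_scaleR_right: "tens a (r *\<^sub>R b) = r *\<^sub>R tens a b"
    and tens_mult: "tens a b * tens c d = tens (a * c) (b * d)"
    and tens_one: "tens 1 1 = 1"
    and stT_tens: "stT (tens a b) = tens (st a) (st b)"
    and Dl_add: "Dl (a + b) = Dl a + Dl b"
    and Dl_scaleR: "Dl (r *\<^sub>R a) = r *\<^sub>R Dl a"
    and Dl_mult: "Dl (a * b) = Dl a * Dl b"
    and Dl_one: "Dl 1 = 1"
    and Dl_st: "Dl (st a) = stT (Dl a)"
    and Dl_K: "i \<in> {1..l} \<Longrightarrow> Dl (K i) = tens (K i) (K i)"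
    and Dl_E: "i \<in> {1..l} \<Longrightarrow> Dl (E i) = tens (E i) (K i) + tens (Ki i) (E i)"
    and Dl_Khi: "Dl Khi = tens Khi Khi"

lemma uq_coproduct_if_uq_data:
  assumes "0 < q" and D: "uq_data l q K Ki E Kh Khi st tens stT Dl"
  shows "uq_coproduct l q K Ki E Khi st tens stT Dl"
proof -
  have "Khi * K i = K i * Khi" if "i \<in> {1..l}" for i
    by (rule inverse_commute[of Kh]) (use D that in \<open>auto simp: uq_data_def\<close>)
  with assms show ?thesis
    unfolding uq_data_def star_inv_def by (elim conjE, unfold_locales) (meson | simp)+
qed

context uq_coproduct
begin

definition q_neg_half :: real where "q_neg_half = q powr (-1/2)"

definition Kcoeff :: "nat \<Rightarrow> nat \<Rightarrow> real" where
  "Kcoeff a b = (if a = b then q else if a = b + 1 \<or> b = a + 1 then q_neg_half else 1)"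

lemma q_neg_half_pos: "0 < q_neg_half"
  unfolding q_neg_half_def using q_pos by simp

lemma q_neg_half_square: "q_neg_half * q_neg_half = inverse q"
proof -
  have "q_neg_half * q_neg_half = q powr (-1/2 + -1/2)"
    unfolding q_neg_half_def by (rule powr_add[symmetric])
  also have "\<dots> = inverse q"
    using q_pos by (simp add: powr_minus)
  finally show ?thesis .
qed

lemma Kcoeff_pos: "0 < Kcoeff a b"
  unfolding Kcoeff_def using q_pos q_neg_half_pos by auto

lemma Kcoeff_sym: "Kcoeff a b = Kcoeff b a"
  unfolding Kcoeff_def by auto

lemma prod_Kcoeff_above:
  assumes "a < b" "g 1 = 1"
  shows "(\<Prod>p\<in>{b..k}. g (Kcoeff a p)) = (if b = Suc a \<and> b \<le> k then g q_neg_half else 1)"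
proof -
  have "(\<Prod>p\<in>{b..k}. g (Kcoeff a p)) = (\<Prod>p\<in>{b..k}. if p = Suc a then g q_neg_half else 1)"
    using assms by (intro prod.cong) (auto simp: Kcoeff_def)
  also have "\<dots> = (if b = Suc a \<and> b \<le> k then g q_neg_half else 1)"
    using assms by (auto simp: prod.delta)
  finally show ?thesis .
qed

lemma K_E_commute:
  assumes "a \<in> {1..l}" "b \<in> {1..l}"
  shows "K a * E b = Kcoeff a b *\<^sub>R (E b * K a)"
proof -
  have "K a * E b = (K a * E b * Ki a) * K a"
    using Ki_K[OF assms(1)] by (simp add: mult.assoc)
  also have "K a * E b * Ki a = Kcoeff a b *\<^sub>R E b"
    using K_E_Ki[OF assms] by (simp add: Kcoeff_def q_neg_half_def)
  finally show ?thesis by simp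
qed

lemma Ki_E_commute:
  assumes "a \<in> {1..l}" "b \<in> {1..l}"
  shows "Ki a * E b = inverse (Kcoeff a b) *\<^sub>R (E b * Ki a)"
proof -
  have "E b * Ki a = Ki a * (K a * E b) * Ki a"
    using Ki_K[OF assms(1)] by (simp add: mult.assoc[symmetric])
  also have "\<dots> = Kcoeff a b *\<^sub>R (Ki a * E b)"
    using K_E_commute[OF assms] K_Ki[OF assms(1)] by (simp add: mult.assoc)
  finally show ?thesis
    using Kcoeff_pos[of a b] by simp
qed

lemma Ki_K_commute: "a \<in> {1..l} \<Longrightarrow> b \<in> {1..l} \<Longrightarrow> Ki a * K b = K b * Ki a"
  by (rule inverse_commute[OF K_Ki Ki_K K_commute])

lemma Ki_commute: "a \<in> {1..l} \<Longrightarrow> b \<in> {1..l} \<Longrightarrow> Ki a * Ki b = Ki b * Ki a"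
  by (rule inverse_commute[OF K_Ki Ki_K]) (simp_all add: Ki_K_commute)

lemma Khi_Ki_commute: "a \<in> {1..l} \<Longrightarrow> Khi * Ki a = Ki a * Khi"
  by (metis inverse_commute[OF K_Ki Ki_K] Khi_K_commute)

lemma K_Mel_commute:
  assumes "a \<in> {1..l}" "a < b" "b \<le> k" "k \<le> l"
  shows "K a * Mel q E b k = (if b = Suc a then q_neg_half else 1) *\<^sub>R (Mel q E b k * K a)"
proof -
  have "K a * Mel q E b k = (\<Prod>p\<in>{b..k}. Kcoeff a p) *\<^sub>R (Mel q E b k * K a)"
    by (rule Mel_skew_commute_left) (use assms in \<open>auto intro!: K_E_commute\<close>)
  then show ?thesis
    using prod_Kcoeff_above[of a b "\<lambda>x. x" k] assms by simp
qed

lemma Ki_Mel_commute: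
  assumes "a \<in> {1..l}" "a < b" "b \<le> k" "k \<le> l"
  shows "Ki a * Mel q E b k = (if b = Suc a then inverse q_neg_half else 1) *\<^sub>R (Mel q E b k * Ki a)"
proof -
  have "Ki a * Mel q E b k = (\<Prod>p\<in>{b..k}. inverse (Kcoeff a p)) *\<^sub>R (Mel q E b k * Ki a)"
    by (rule Mel_skew_commute_left) (use assms in \<open>auto intro!: Ki_E_commute\<close>)
  then show ?thesis
    using prod_Kcoeff_above[of a b inverse k] assms by simp
qed

lemma E_Mel_commute_far:
  assumes "a \<in> {1..l}" "Suc a < b" "b \<le> k" "k \<le> l"
  shows "E a * Mel q E b k = Mel q E b k * E a"
  using Mel_skew_commute_left[of b k "E a" E "\<lambda>_. 1"] assms by (simp add: E_commute_far)

lemma Kprod_K_E_commute: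
  assumes "j \<in> {1..l}" "j < a" "a \<le> b" "b \<le> l"
  shows "Kprod K a b * E j = (if a = Suc j then q_neg_half else 1) *\<^sub>R (E j * Kprod K a b)"
proof -
  have "Kprod K a b * E j = (\<Prod>p\<in>{a..b}. Kcoeff j p) *\<^sub>R (E j * Kprod K a b)"
    by (rule Kprod_skew_commute_right) (use assms in \<open>auto intro!: K_E_commute simp: Kcoeff_sym\<close>)
  then show ?thesis
    using prod_Kcoeff_above[of j a "\<lambda>x. x" b] assms by simp
qed

lemma Kprod_Ki_E_commute:
  assumes "j \<in> {1..l}" "j < a" "a \<le> b" "b \<le> l"
  shows "Kprod Ki a b * E j = (if a = Suc j then inverse q_neg_half else 1) *\<^sub>R (E j * Kprod Ki a b)"
proof -
  have "Kprod Ki a b * E j = (\<Prod>p\<in>{a..b}. inverse (Kcoeff j p)) *\<^sub>R (E j * Kprod Ki a b)"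
    by (rule Kprod_skew_commute_right) (use assms in \<open>auto intro!: Ki_E_commute simp: Kcoeff_sym\<close>)
  then show ?thesis
    using prod_Kcoeff_above[of j a inverse b] assms by simp
qed

lemma K_Kprod_K_commute: "j \<in> {1..l} \<Longrightarrow> 1 \<le> a \<Longrightarrow> b \<le> l \<Longrightarrow> K j * Kprod K a b = Kprod K a b * K j"
  by (rule Kprod_commute) (auto intro: K_commute)

lemma Ki_Kprod_Ki_commute: "j \<in> {1..l} \<Longrightarrow> 1 \<le> a \<Longrightarrow> b \<le> l \<Longrightarrow> Ki j * Kprod Ki a b = Kprod Ki a b * Ki j"
  by (rule Kprod_commute) (auto intro: Ki_commute)

lemma Ki_Kprod_K_commute: "j \<in> {1..l} \<Longrightarrow> 1 \<le> a \<Longrightarrow> b \<le> l \<Longrightarrow> Ki j * Kprod K a b = Kprod K a b * Ki j"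
  by (rule Kprod_commute) (auto intro: Ki_K_commute)

lemma Khi_Kprod_K_commute: "1 \<le> a \<Longrightarrow> b \<le> l \<Longrightarrow> Khi * Kprod K a b = Kprod K a b * Khi"
  by (rule Kprod_commute) (auto intro: Khi_K_commute)

lemma Khi_Kprod_Ki_commute: "1 \<le> a \<Longrightarrow> b \<le> l \<Longrightarrow> Khi * Kprod Ki a b = Kprod Ki a b * Khi"
  by (rule Kprod_commute) (auto intro: Khi_Ki_commute)

lemma Kprod_K_Ki: "1 \<le> a \<Longrightarrow> b \<le> l \<Longrightarrow> Kprod K a b * Kprod Ki a b = 1"
proof (induction a rule: nat_down_induct[where b = b])
  case (above a)
  then show ?case by (simp add: Kprod_empty)
next
  case (step a)
  have "Kprod K a b * Kprod Ki a b = K a * (Kprod K (Suc a) b * Ki a) * Kprod Ki (Suc a) b"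
    using step by (simp add: Kprod_Cons mult.assoc)
  also have "\<dots> = (K a * Ki a) * (Kprod K (Suc a) b * Kprod Ki (Suc a) b)"
  proof -
    have "Kprod K (Suc a) b * Ki a = Ki a * Kprod K (Suc a) b"
      using Ki_Kprod_K_commute[of a "Suc a" b] step by simp
    then show ?thesis by (metis mult.assoc)
  qed
  finally show ?case
    using step K_Ki[of a] by simp
qed

lemma st_Ki:
  assumes "i \<in> {1..l}"
  shows "st (Ki i) = Ki i"
proof -
  have "st (Ki i) * K i = 1"
    using st_mult[of "K i" "Ki i"] K_Ki[OF assms] st_K[OF assms] st_one by simp
  then have "st (Ki i) = (st (Ki i) * K i) * Ki i"
    using K_Ki[OF assms] by (metis mult.assoc mult_1_right)
  with \<open>st (Ki i) * K i = 1\<close> show ?thesis by simp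
qed

lemma st_Kprod:
  assumes "\<And>m. m \<in> {a..b} \<Longrightarrow> st (f m) = f m"
    and "\<And>m p. m \<in> {a..b} \<Longrightarrow> p \<in> {a..b} \<Longrightarrow> f m * f p = f p * f m"
  shows "st (Kprod f a b) = Kprod f a b"
  using assms
proof (induction a rule: nat_down_induct[where b = b])
  case (above a)
  then show ?case by (simp add: Kprod_empty st_one)
next
  case (step a)
  have "f a * Kprod f (Suc a) b = Kprod f (Suc a) b * f a"
    by (rule Kprod_commute) (use step in auto)
  then show ?case
    using step by (simp add: Kprod_Cons st_mult)
qed

lemma st_Kprod_K: "1 \<le> a \<Longrightarrow> b \<le> l \<Longrightarrow> st (Kprod K a b) = Kprod K a b"
  by (rule st_Kprod) (auto intro: st_K K_commute)

lemma st_Kprod_Ki: "1 \<le> a \<Longrightarrow> b \<le> l \<Longrightarrow> st (Kprod Ki a b) = Kprod Ki a b"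
  by (rule st_Kprod) (auto intro: st_Ki Ki_commute)

lemma Dl_Kprod_K: "1 \<le> a \<Longrightarrow> b \<le> l \<Longrightarrow> Dl (Kprod K a b) = tens (Kprod K a b) (Kprod K a b)"
proof (induction a rule: nat_down_induct[where b = b])
  case (above a)
  then show ?case by (simp add: Kprod_empty Dl_one tens_one)
next
  case (step a)
  then show ?case by (simp add: Kprod_Cons Dl_mult Dl_K tens_mult)
qed

lemma tens_diff_left: "tens (a - b) c = tens a c - tens b c"
  using tens_add_left[of "a - b" b c] by (simp add: algebra_simps)

lemma tens_diff_right: "tens a (b - c) = tens a b - tens a c"
  using tens_add_right[of a "b - c" c] by (simp add: algebra_simps)

lemma Dl_qbr: "Dl (qbr q a b) = qbr q (Dl a) (Dl b)"
  using Dl_add[of "qbr q a b" "inverse q *\<^sub>R (b * a)"]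
  by (simp add: qbr_def Dl_mult Dl_scaleR algebra_simps)

lemma stT_sum: "stT (sum f S) = (\<Sum>x\<in>S. stT (f x))"
proof -
  have "stT 0 = 0"
    using stT_add[of 0 0] by simp
  then show ?thesis
    by (induction S rule: infinite_finite_induct) (simp_all add: stT_add)
qed

lemma q_neg_half_cancel: "q_neg_half - inverse q * inverse q_neg_half = 0"
proof -
  have "inverse q * inverse q_neg_half = q_neg_half * q_neg_half * inverse q_neg_half"
    by (simp add: q_neg_half_square)
  also have "\<dots> = q_neg_half"
    using q_neg_half_pos by simp
  finally show ?thesis by simp
qed

definition Mel_cross_term :: "nat \<Rightarrow> nat \<Rightarrow> nat \<Rightarrow> 't" where
  "Mel_cross_term j k m = tens (Kprod Ki j m * Mel q E (Suc m) k) (Mel q E j m * Kprod K (Suc m) k)"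

context
  fixes j k :: nat
  assumes j_pos: "1 \<le> j" and j_less_k: "j < k" and k_le_l: "k \<le> l"
begin

lemma j_range: "j \<in> {1..l}"
  using j_pos j_less_k k_le_l by simp

lemma qbr_E_K_Mel_Kprod:
  "qbr q (tens (E j) (K j)) (tens (Mel q E (Suc j) k) (Kprod K (Suc j) k))
   = tens (Mel q E j k) (Kprod K j k)"
proof -
  have "Kprod K (Suc j) k * K j = K j * Kprod K (Suc j) k"
    using K_Kprod_K_commute[OF j_range, of "Suc j" k] k_le_l by simp
  then show ?thesis
    using j_less_k by (simp add: qbr_def tens_mult Mel_rec Kprod_Cons tens_diff_left tens_scaleR_left)
qed

lemma qbr_Ki_E_Kprod_Mel:
  "qbr q (tens (Ki j) (E j)) (tens (Kprod Ki (Suc j) k) (Mel q E (Suc j) k))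
   = tens (Kprod Ki j k) (Mel q E j k)"
proof -
  have "Kprod Ki (Suc j) k * Ki j = Ki j * Kprod Ki (Suc j) k"
    using Ki_Kprod_Ki_commute[OF j_range, of "Suc j" k] k_le_l by simp
  then show ?thesis
    using j_less_k by (simp add: qbr_def tens_mult Mel_rec Kprod_Cons tens_diff_right tens_scaleR_right)
qed

lemma qbr_E_K_Kprod_Mel:
  "qbr q (tens (E j) (K j)) (tens (Kprod Ki (Suc j) k) (Mel q E (Suc j) k)) = 0"
proof -
  have "K j * Mel q E (Suc j) k = q_neg_half *\<^sub>R (Mel q E (Suc j) k * K j)"
    using K_Mel_commute[OF j_range, of "Suc j" k] j_less_k k_le_l by simp
  moreover have "Kprod Ki (Suc j) k * E j = inverse q_neg_half *\<^sub>R (E j * Kprod Ki (Suc j) k)"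
    using Kprod_Ki_E_commute[OF j_range, of "Suc j" k] j_less_k k_le_l by simp
  ultimately have "qbr q (tens (E j) (K j)) (tens (Kprod Ki (Suc j) k) (Mel q E (Suc j) k))
     = (q_neg_half - inverse q * inverse q_neg_half) *\<^sub>R
         tens (E j * Kprod Ki (Suc j) k) (Mel q E (Suc j) k * K j)"
    by (simp add: qbr_def tens_mult tens_scaleR_left tens_scaleR_right scaleR_diff_left)
  then show ?thesis
    by (simp add: q_neg_half_cancel)
qed

lemma qbr_Ki_E_Mel_Kprod:
  "qbr q (tens (Ki j) (E j)) (tens (Mel q E (Suc j) k) (Kprod K (Suc j) k))
   = (1 - inverse q * inverse q) *\<^sub>R Mel_cross_term j k j"
proof -
  have "Ki j * Mel q E (Suc j) k = inverse q_neg_half *\<^sub>R (Mel q E (Suc j) k * Ki j)"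
    using Ki_Mel_commute[OF j_range, of "Suc j" k] j_less_k k_le_l by simp
  then have "Mel q E (Suc j) k * Ki j = q_neg_half *\<^sub>R (Ki j * Mel q E (Suc j) k)"
    using q_neg_half_pos by simp
  moreover have "Kprod K (Suc j) k * E j = q_neg_half *\<^sub>R (E j * Kprod K (Suc j) k)"
    using Kprod_K_E_commute[OF j_range, of "Suc j" k] j_less_k k_le_l by simp
  ultimately have "qbr q (tens (Ki j) (E j)) (tens (Mel q E (Suc j) k) (Kprod K (Suc j) k))
     = (1 - inverse q * (q_neg_half * q_neg_half)) *\<^sub>R
         tens (Ki j * Mel q E (Suc j) k) (E j * Kprod K (Suc j) k)"
    by (simp add: qbr_def tens_mult tens_scaleR_left tens_scaleR_right scaleR_diff_left)
  then show ?thesis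
    by (simp add: q_neg_half_square Mel_cross_term_def Kprod_singleton Mel_same)
qed

lemma qbr_E_K_Mel_cross_term:
  assumes "j < m" "m < k"
  shows "qbr q (tens (E j) (K j)) (Mel_cross_term (Suc j) k m) = 0"
proof -
  have 1: "Kprod Ki (Suc j) m * E j = inverse q_neg_half *\<^sub>R (E j * Kprod Ki (Suc j) m)"
    using Kprod_Ki_E_commute[OF j_range, of "Suc j" m] assms k_le_l by simp
  have 2: "Mel q E (Suc m) k * E j = E j * Mel q E (Suc m) k"
    using E_Mel_commute_far[OF j_range, of "Suc m" k] assms k_le_l by simp
  have 3: "K j * Mel q E (Suc j) m = q_neg_half *\<^sub>R (Mel q E (Suc j) m * K j)"
    using K_Mel_commute[OF j_range, of "Suc j" m] assms k_le_l by simp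
  have 4: "K j * Kprod K (Suc m) k = Kprod K (Suc m) k * K j"
    using K_Kprod_K_commute[OF j_range, of "Suc m" k] k_le_l by simp
  have "Kprod Ki (Suc j) m * Mel q E (Suc m) k * E j
      = inverse q_neg_half *\<^sub>R (E j * (Kprod Ki (Suc j) m * Mel q E (Suc m) k))"
    by (simp add: mult.assoc 2) (simp add: mult.assoc[symmetric] 1)
  moreover have "K j * (Mel q E (Suc j) m * Kprod K (Suc m) k)
      = q_neg_half *\<^sub>R (Mel q E (Suc j) m * Kprod K (Suc m) k * K j)"
    by (simp add: mult.assoc[symmetric] 3) (simp add: mult.assoc 4)
  ultimately have "qbr q (tens (E j) (K j)) (Mel_cross_term (Suc j) k m)
    = (q_neg_half - inverse q * inverse q_neg_half) *\<^sub>R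
        tens (E j * (Kprod Ki (Suc j) m * Mel q E (Suc m) k)) (Mel q E (Suc j) m * Kprod K (Suc m) k * K j)"
    unfolding qbr_def tens_mult Mel_cross_term_def
    by (simp add: tens_scaleR_left tens_scaleR_right scaleR_diff_left)
  then show ?thesis
    by (simp add: q_neg_half_cancel)
qed

lemma qbr_Ki_E_Mel_cross_term:
  assumes "j < m" "m < k"
  shows "qbr q (tens (Ki j) (E j)) (Mel_cross_term (Suc j) k m) = Mel_cross_term j k m"
proof -
  have 1: "Kprod Ki (Suc j) m * Ki j = Ki j * Kprod Ki (Suc j) m"
    using Ki_Kprod_Ki_commute[OF j_range, of "Suc j" m] assms k_le_l by simp
  have 2: "Mel q E (Suc m) k * Ki j = Ki j * Mel q E (Suc m) k"
    using Ki_Mel_commute[OF j_range, of "Suc m" k] assms k_le_l by simp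
  have 3: "Kprod K (Suc m) k * E j = E j * Kprod K (Suc m) k"
    using Kprod_K_E_commute[OF j_range, of "Suc m" k] assms k_le_l by simp
  have "Kprod Ki (Suc j) m * Mel q E (Suc m) k * Ki j = Ki j * (Kprod Ki (Suc j) m * Mel q E (Suc m) k)"
    by (simp add: mult.assoc 2) (simp add: mult.assoc[symmetric] 1)
  moreover have "Mel q E (Suc j) m * Kprod K (Suc m) k * E j = Mel q E (Suc j) m * E j * Kprod K (Suc m) k"
    by (simp add: mult.assoc 3)
  ultimately show ?thesis
    unfolding qbr_def tens_mult Mel_cross_term_def
    using assms by (simp add: Mel_rec Kprod_Cons qbr_def tens_diff_right tens_scaleR_right
        left_diff_distrib mult.assoc)
qed

end

lemma Dl_Mel:
  assumes "1 \<le> j" "j \<le> k" "k \<le> l"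
  shows "Dl (Mel q E j k) = tens (Mel q E j k) (Kprod K j k) + tens (Kprod Ki j k) (Mel q E j k)
    + (1 - inverse q * inverse q) *\<^sub>R (\<Sum>m = j..<k. Mel_cross_term j k m)"
  using assms
proof (induction "k - j" arbitrary: j)
  case 0
  then show ?case by (simp add: Mel_same Kprod_singleton Dl_E)
next
  case (Suc d j)
  then have j: "1 \<le> j" "j < k" "k \<le> l" by auto
  then have j_range: "j \<in> {1..l}" by simp
  define c where "c = 1 - inverse q * inverse q"
  define S where "S = (\<Sum>m = Suc j..<k. Mel_cross_term (Suc j) k m)"
  have IH: "Dl (Mel q E (Suc j) k) = tens (Mel q E (Suc j) k) (Kprod K (Suc j) k)
     + tens (Kprod Ki (Suc j) k) (Mel q E (Suc j) k) + c *\<^sub>R S"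
    using Suc j unfolding c_def S_def by simp
  have "qbr q (tens (E j) (K j)) S = 0"
    unfolding S_def qbr_sum_right
    by (rule sum.neutral) (use qbr_E_K_Mel_cross_term j in auto)
  moreover have "qbr q (tens (Ki j) (E j)) S = (\<Sum>m = Suc j..<k. Mel_cross_term j k m)"
    unfolding S_def qbr_sum_right
    by (rule sum.cong) (use qbr_Ki_E_Mel_cross_term j in auto)
  ultimately have "Dl (Mel q E j k) = tens (Mel q E j k) (Kprod K j k)
     + tens (Kprod Ki j k) (Mel q E j k)
     + c *\<^sub>R (Mel_cross_term j k j + (\<Sum>m = Suc j..<k. Mel_cross_term j k m))"
    using qbr_E_K_Mel_Kprod[OF j] qbr_E_K_Kprod_Mel[OF j]
      qbr_Ki_E_Mel_Kprod[OF j] qbr_Ki_E_Kprod_Mel[OF j]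
    by (simp add: Mel_rec[OF j(2)] Dl_qbr IH Dl_E[OF j_range] qbr_add_left qbr_add_right
        qbr_scaleR_right c_def scaleR_right_distrib)
  then show ?case
    using j by (simp add: sum.atLeast_Suc_lessThan c_def)
qed

lemma stT_Mel_cross_term:
  assumes "1 \<le> j" "m < k" "k \<le> l"
  shows "stT (Mel_cross_term j k m)
    = tens (st (Mel q E (Suc m) k) * Kprod Ki j m) (Kprod K (Suc m) k * st (Mel q E j m))"
  using assms by (simp add: Mel_cross_term_def stT_tens st_mult st_Kprod_K st_Kprod_Ki)

lemma st_Mel_Kprod_Ki_commute:
  assumes "1 \<le> i" "i \<le> m" "m < l"
  shows "st (Mel q E (Suc m) l) * Kprod Ki i m
    = inverse q_neg_half *\<^sub>R (Kprod Ki i m * st (Mel q E (Suc m) l))"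
proof -
  have "st (Mel q E (Suc m) l) * Ki a
      = (if a = m then inverse q_neg_half else 1) *\<^sub>R (Ki a * st (Mel q E (Suc m) l))"
    if a: "a \<in> {i..m}" for a
  proof -
    have a_range: "a \<in> {1..l}" using a assms by auto
    have "Ki a * Mel q E (Suc m) l
        = (if a = m then inverse q_neg_half else 1) *\<^sub>R (Mel q E (Suc m) l * Ki a)"
      using Ki_Mel_commute[OF a_range, of "Suc m" l] a assms by simp
    then show ?thesis
      by (metis st_mult st_scaleR st_Ki[OF a_range])
  qed
  then have "st (Mel q E (Suc m) l) * Kprod Ki i m
      = (\<Prod>a\<in>{i..m}. if a = m then inverse q_neg_half else 1) *\<^sub>R (Kprod Ki i m * st (Mel q E (Suc m) l))"
    by (rule Kprod_skew_commute_left)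
  then show ?thesis
    using assms by simp
qed

lemma Kprod_K_mult_Kprod_Ki_prefix:
  assumes "1 \<le> a" "a \<le> Suc m" "m \<le> b" "b \<le> l"
  shows "Kprod K a b * Kprod Ki a m = Kprod K (Suc m) b"
proof -
  have "Kprod K (Suc m) b * Kprod Ki a m = Kprod Ki a m * Kprod K (Suc m) b"
    by (rule Kprod_commute) (use assms Ki_Kprod_K_commute in auto)
  then have "Kprod K a b * Kprod Ki a m = (Kprod K a m * Kprod Ki a m) * Kprod K (Suc m) b"
    using assms by (simp add: Kprod_split[of a m b] mult.assoc)
  then show ?thesis
    using assms by (simp add: Kprod_K_Ki)
qed

lemma q_neg_half_scalar_identity:
  "(1 - inverse q * inverse q) * inverse q_neg_half = q_neg_half * (q - inverse q)"
proof -
  have "(1 - inverse q * inverse q) * inverse q_neg_half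
      = (1 - (q_neg_half * q_neg_half) * (q_neg_half * q_neg_half)) * inverse q_neg_half"
    by (simp only: q_neg_half_square)
  also have "\<dots> = q_neg_half * (inverse (q_neg_half * q_neg_half) - q_neg_half * q_neg_half)"
    using q_neg_half_pos by (simp add: field_simps)
  also have "\<dots> = q_neg_half * (q - inverse q)"
    by (simp add: q_neg_half_square)
  finally show ?thesis .
qed

context
  fixes i :: nat
  assumes i_pos: "1 \<le> i" and i_le_l: "i \<le> l"
begin

lemma Dl_Xel:
  "Dl (Xel l q K E Khi st i)
    = tens (Nel l K Khi i l) (Nel l K Khi i l) * stT (Dl (Mel q E i l))"
proof -
  have "Dl (Nel l K Khi i l) = tens (Nel l K Khi i l) (Nel l K Khi i l)"
    unfolding Nel_last using i_pos by (simp add: Dl_mult Dl_Kprod_K Dl_Khi tens_mult)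
  then show ?thesis
    by (simp only: Xel_def Dl_mult Dl_st)
qed

lemma tens_Nel_mult_leading_term:
  "tens (Nel l K Khi i l) (Nel l K Khi i l) * tens (st (Mel q E i l)) (Kprod K i l)
    = tens (Xel l q K E Khi st i) (Nel l K Khi i (i - 1))"
  using i_pos Khi_Kprod_K_commute[of i l] by (simp add: tens_mult Xel_eq Nel_def Kprod_empty mult.assoc)

lemma tens_Nel_mult_inverse_term:
  "tens (Nel l K Khi i l) (Nel l K Khi i l) * tens (Kprod Ki i l) (st (Mel q E i l))
    = tens Khi (Xel l q K E Khi st i)"
proof -
  have "Kprod K i l * Khi * Kprod Ki i l = Kprod K i l * Kprod Ki i l * Khi"
    using i_pos Khi_Kprod_Ki_commute[of i l] by (simp add: mult.assoc)
  then have "Kprod K i l * Khi * Kprod Ki i l = Khi"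
    using i_pos Kprod_K_Ki[of i l] by simp
  then show ?thesis
    by (simp add: tens_mult Xel_eq Nel_last mult.assoc)
qed

lemma tens_Nel_mult_cross_term:
  assumes "i \<le> m" "m < l"
  shows "tens (Nel l K Khi i l) (Nel l K Khi i l) * stT (Mel_cross_term i l m)
    = inverse q_neg_half *\<^sub>R tens (Xel l q K E Khi st (Suc m)) (Nel l K Khi i m * st (Mel q E i m))"
proof -
  have "Kprod K i l * Khi * Kprod Ki i m = Kprod K i l * Kprod Ki i m * Khi"
    using i_pos assms Khi_Kprod_Ki_commute[of i m] by (simp add: mult.assoc)
  then have "Kprod K i l * Khi * Kprod Ki i m = Kprod K (Suc m) l * Khi"
    using i_pos assms Kprod_K_mult_Kprod_Ki_prefix[of i m l] by simp
  moreover have "Kprod K i l * Khi * (st (Mel q E (Suc m) l) * Kprod Ki i m)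
      = inverse q_neg_half *\<^sub>R (Kprod K i l * Khi * Kprod Ki i m * st (Mel q E (Suc m) l))"
    using i_pos assms st_Mel_Kprod_Ki_commute[of i m] by (simp add: mult.assoc)
  ultimately have left: "Kprod K i l * Khi * (st (Mel q E (Suc m) l) * Kprod Ki i m)
      = inverse q_neg_half *\<^sub>R Xel l q K E Khi st (Suc m)"
    by (simp add: Xel_eq)
  have "Khi * Kprod K (Suc m) l = Kprod K (Suc m) l * Khi"
    using assms by (simp add: Khi_Kprod_K_commute)
  then have right: "Kprod K i l * Khi * (Kprod K (Suc m) l * st (Mel q E i m))
      = Nel l K Khi i m * st (Mel q E i m)"
    by (simp add: Nel_def mult.assoc) (simp add: mult.assoc[symmetric])
  show ?thesis
    using i_pos assms
    by (simp add: stT_Mel_cross_term tens_mult Nel_last left right tens_scaleR_left)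
qed

theorem Dl_Xel_expansion:
  "Dl (Xel l q K E Khi st i) =
     tens (Xel l q K E Khi st i) (Nel l K Khi i (i - 1))
   + tens Khi (Xel l q K E Khi st i)
   + (q powr (-1/2) * (q - inverse q)) *\<^sub>R
       (\<Sum>j = i..l - 1. tens (Xel l q K E Khi st (j + 1)) (Nel l K Khi i j * st (Mel q E i j)))"
proof -
  define P where "P = tens (Nel l K Khi i l) (Nel l K Khi i l)"
  define c where "c = 1 - inverse q * inverse q"
  define T where "T j = tens (Xel l q K E Khi st (j + 1)) (Nel l K Khi i j * st (Mel q E i j))" for j
  have "stT (Dl (Mel q E i l)) = tens (st (Mel q E i l)) (Kprod K i l)
      + tens (Kprod Ki i l) (st (Mel q E i l)) + c *\<^sub>R (\<Sum>m = i..<l. stT (Mel_cross_term i l m))"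
    using Dl_Mel[of i l] i_pos i_le_l
    by (simp add: c_def stT_add stT_scaleR stT_sum stT_tens st_Kprod_K st_Kprod_Ki)
  moreover have "P * (\<Sum>m = i..<l. stT (Mel_cross_term i l m)) = inverse q_neg_half *\<^sub>R (\<Sum>m = i..<l. T m)"
    unfolding sum_distrib_left scaleR_sum_right P_def T_def
    by (rule sum.cong) (simp_all add: tens_Nel_mult_cross_term)
  ultimately have "Dl (Xel l q K E Khi st i) = tens (Xel l q K E Khi st i) (Nel l K Khi i (i - 1))
      + tens Khi (Xel l q K E Khi st i) + (c * inverse q_neg_half) *\<^sub>R (\<Sum>m = i..<l. T m)"
    by (simp add: Dl_Xel P_def[symmetric] distrib_left tens_Nel_mult_leading_term[folded P_def]
        tens_Nel_mult_inverse_term[folded P_def] mult_scaleR_right)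
  moreover have "{i..<l} = {i..l - 1}"
    using i_pos i_le_l by auto
  ultimately show ?thesis
    using q_neg_half_scalar_identity unfolding q_neg_half_def by (simp add: T_def c_def)
qed

end

end

theorem lemma3p15:
  fixes l :: nat and q :: real
    and K Ki E :: "nat \<Rightarrow> 'a::real_algebra_1" and Kh Khi :: 'a and st :: "'a \<Rightarrow> 'a"
    and tens :: "'a \<Rightarrow> 'a \<Rightarrow> 't::real_algebra_1" and stT :: "'t \<Rightarrow> 't" and Dl :: "'a \<Rightarrow> 't"
  assumes "0 < q" and "q < 1" and "1 \<le> l"
    and "uq_data l q K Ki E Kh Khi st tens stT Dl"
    and "1 \<le> i" and "i \<le> l"
  shows "Dl (Xel l q K E Khi st i) =
           tens (Xel l q K E Khi st i) (Nel l K Khi i (i - 1))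
         + tens Khi (Xel l q K E Khi st i)
         + scaleR (q powr (-1/2) * (q - inverse q))
             (\<Sum>j = i..l - 1. tens (Xel l q K E Khi st (j + 1)) (Nel l K Khi i j * st (Mel q E i j)))"
proof -
  interpret uq_coproduct l q K Ki E Khi st tens stT Dl
    using assms(1,4) by (rule uq_coproduct_if_uq_data)
  show ?thesis
    using assms(5,6) by (rule Dl_Xel_expansion)
qed

end
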